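(* Let $(\Omega,\mu)$ be a measure space with a $\sigma$-additive $\sigma$-finite measure, let $G$ be a discrete group, and let $\{\theta_g\}_{g\in G}$ be a group of (algebra) automorphisms of $L^\infty_\mu(\Omega)$ (with $\theta_{gh}=\theta_g\theta_h$). Let $M$ be the maximal ideal space of $L^\infty_\mu(\Omega)$, $\Gamma:L^\infty_\mu(\Omega)\to C(M)$ the Gelfand isomorphism, and let $t_g:M\to M$ be the homeomorphisms such that $\Gamma(\theta_g(z))(m)=\Gamma(z)(t_g^{-1}(m))$ for all $z\in L^\infty_\mu(\Omega)$, $m\in M$. For each class $\Delta$ of measurable sets (modulo null sets) define $\alpha_g(\Delta)$ by $\theta_g(\chi_\Delta)=\chi_{\alpha_g(\Delta)}$. Then the following are equivalent: (a) $G$ acts metrically freely, i.e. for every finite set $\{g_1,\dots,g_k\}\subset G$ and every measurable $\Delta$ with $\mu(\Delta)>0$ there exists a measurable $\Delta'\subset\Delta$ with $\mu(\Delta')>0$ and $\mu(\alpha_{g_i}(\Delta')\cap\alpha_{g_j}(\Delta'))=0$ for all $i\ne j$; (b) $G$ acts topologically freely on $M$, i.e. for every finite set $\{g_1,\dots,g_k\}\subset G$ and every nonempty open $U\subset M$ there exists a nonempty open $V\subset U$ with $t_{g_i}(V)\cap t_{g_j}(V)=\emptyset$ for all $i\neq j$.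
   Context: $\chi_\Delta$ denotes the characteristic function of $\Delta$ in $L^\infty_\mu(\Omega)$; since $\theta_g(\chi_\Delta)$ is again an idempotent of $L^\infty_\mu(\Omega)$, it is the characteristic function of a (class of) measurable set, which is denoted $\alpha_g(\Delta)$. $\mu(\Delta)>0$ iff $\chi_\Delta\neq 0$. *)

theory Defs
  imports "HOL-Analysis.Analysis" "HOL-Probability.Probability"
begin

text \<open>Elements of L^infinity_mu(Omega) are represented by essentially bounded
  measurable complex functions; equality in L^infinity is almost-everywhere equality.\<close>

definition Linf :: "'a measure \<Rightarrow> ('a \<Rightarrow> complex) set" where
  "Linf M = {f. f \<in> borel_measurable M \<and> (\<exists>C. AE x in M. norm (f x) \<le> C)}"

definition ae_eq :: "'a measure \<Rightarrow> ('a \<Rightarrow> complex) \<Rightarrow> ('a \<Rightarrow> complex) \<Rightarrow> bool" where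
  "ae_eq M f g \<longleftrightarrow> (AE x in M. f x = g x)"

definition Linf_automorphism :: "'a measure \<Rightarrow> (('a \<Rightarrow> complex) \<Rightarrow> ('a \<Rightarrow> complex)) \<Rightarrow> bool" where
  "Linf_automorphism M T \<longleftrightarrow>
     (\<forall>f\<in>Linf M. T f \<in> Linf M) \<and>
     (\<forall>f\<in>Linf M. \<forall>f'\<in>Linf M. ae_eq M f f' \<longrightarrow> ae_eq M (T f) (T f')) \<and>
     (\<forall>f\<in>Linf M. \<forall>f'\<in>Linf M. ae_eq M (T (\<lambda>x. f x + f' x)) (\<lambda>x. T f x + T f' x)) \<and>
     (\<forall>f\<in>Linf M. \<forall>c. ae_eq M (T (\<lambda>x. c * f x)) (\<lambda>x. c * T f x)) \<and>
     (\<forall>f\<in>Linf M. \<forall>f'\<in>Linf M. ae_eq M (T (\<lambda>x. f x * f' x)) (\<lambda>x. T f x * T f' x)) \<and>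
     ae_eq M (T (\<lambda>x. 1)) (\<lambda>x. 1) \<and>
     (\<forall>f\<in>Linf M. \<forall>f'\<in>Linf M. ae_eq M (T f) (T f') \<longrightarrow> ae_eq M f f') \<and>
     (\<forall>f\<in>Linf M. \<exists>h\<in>Linf M. ae_eq M (T h) f)"

definition Linf_group_action :: "'a measure \<Rightarrow> ('g::group_add \<Rightarrow> ('a \<Rightarrow> complex) \<Rightarrow> ('a \<Rightarrow> complex)) \<Rightarrow> bool" where
  "Linf_group_action M \<theta> \<longleftrightarrow>
     (\<forall>g. Linf_automorphism M (\<theta> g)) \<and>
     (\<forall>g h. \<forall>f\<in>Linf M. ae_eq M (\<theta> (g + h) f) (\<theta> g (\<theta> h f))) \<and>
     (\<forall>f\<in>Linf M. ae_eq M (\<theta> 0 f) f)"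

text \<open>Maximal ideal space of L^infinity, realised (Gelfand) as the set of characters,
  i.e. nonzero multiplicative linear functionals (normalised to 0 off Linf).\<close>

definition characters :: "'a measure \<Rightarrow> (('a \<Rightarrow> complex) \<Rightarrow> complex) set" where
  "characters M = {\<phi>.
     (\<forall>f. f \<notin> Linf M \<longrightarrow> \<phi> f = 0) \<and>
     (\<forall>f\<in>Linf M. \<forall>f'\<in>Linf M. ae_eq M f f' \<longrightarrow> \<phi> f = \<phi> f') \<and>
     (\<forall>f\<in>Linf M. \<forall>f'\<in>Linf M. \<phi> (\<lambda>x. f x + f' x) = \<phi> f + \<phi> f') \<and>
     (\<forall>f\<in>Linf M. \<forall>c. \<phi> (\<lambda>x. c * f x) = c * \<phi> f) \<and>
     (\<forall>f\<in>Linf M. \<forall>f'\<in>Linf M. \<phi> (\<lambda>x. f x * f' x) = \<phi> f * \<phi> f') \<and>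
     \<phi> (\<lambda>x. 1) = 1}"

text \<open>Gelfand (weak-star) topology on the maximal ideal space: the topology of
  pointwise convergence, i.e. the coarsest one making all Gelfand transforms
  Gamma(z) = (\<lambda>\<phi>. \<phi> z) continuous.\<close>

definition gelfand_top :: "'a measure \<Rightarrow> (('a \<Rightarrow> complex) \<Rightarrow> complex) topology" where
  "gelfand_top M = subtopology (product_topology (\<lambda>_. euclidean) UNIV) (characters M)"

definition gelfand :: "('a \<Rightarrow> complex) \<Rightarrow> (('a \<Rightarrow> complex) \<Rightarrow> complex) \<Rightarrow> complex" where
  "gelfand z m = m z"

definition alpha :: "'a measure \<Rightarrow> ('g \<Rightarrow> ('a \<Rightarrow> complex) \<Rightarrow> ('a \<Rightarrow> complex)) \<Rightarrow> 'g \<Rightarrow> 'a set \<Rightarrow> 'a set" where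
  "alpha M \<theta> g D = (SOME A. A \<in> sets M \<and> ae_eq M (\<theta> g (indicator D)) (indicator A))"

definition metrically_free :: "'a measure \<Rightarrow> ('g \<Rightarrow> ('a \<Rightarrow> complex) \<Rightarrow> ('a \<Rightarrow> complex)) \<Rightarrow> bool" where
  "metrically_free M \<theta> \<longleftrightarrow>
     (\<forall>F. finite F \<longrightarrow> (\<forall>D\<in>sets M. emeasure M D > 0 \<longrightarrow>
        (\<exists>D'\<in>sets M. D' \<subseteq> D \<and> emeasure M D' > 0 \<and>
           (\<forall>g\<in>F. \<forall>h\<in>F. g \<noteq> h \<longrightarrow> emeasure M (alpha M \<theta> g D' \<inter> alpha M \<theta> h D') = 0))))"

definition topologically_free :: "'b topology \<Rightarrow> ('g \<Rightarrow> 'b \<Rightarrow> 'b) \<Rightarrow> bool" where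
  "topologically_free X t \<longleftrightarrow>
     (\<forall>F. finite F \<longrightarrow> (\<forall>U. openin X U \<and> U \<noteq> {} \<longrightarrow>
        (\<exists>V. openin X V \<and> V \<noteq> {} \<and> V \<subseteq> U \<and>
           (\<forall>g\<in>F. \<forall>h\<in>F. g \<noteq> h \<longrightarrow> t g ` V \<inter> t h ` V = {}))))"

end

theory Submission imports Defs begin

text \<open>For a measurable set \<open>D\<close> let \<open>U\<^sub>D\<close> be the set of characters \<open>\<phi>\<close> of \<open>L\<^sup>\<infinity>\<close> with
  \<open>\<phi>(\<chi>\<^sub>D) = 1\<close>. These sets are open and form a base of the Gelfand topology,
  \<open>U\<^bsub>A \<inter> B\<^esub> = U\<^sub>A \<inter> U\<^sub>B\<close>, and \<open>U\<^sub>D\<close> is empty iff \<open>\<mu>(D) = 0\<close>: a character in \<open>U\<^sub>D\<close> is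
  obtained as the limit along an ultrafilter finer than "almost every point of \<open>D\<close>". The
  equivariance of the Gelfand transform gives \<open>t\<^sub>g(U\<^sub>D) = U\<^bsub>\<alpha>\<^sub>g(D)\<^esub>\<close>, so
  \<open>t\<^sub>g(U\<^sub>D) \<inter> t\<^sub>h(U\<^sub>D) = \<emptyset>\<close> iff \<open>\<mu>(\<alpha>\<^sub>g(D) \<inter> \<alpha>\<^sub>h(D)) = 0\<close>, and each notion of freeness
  transfers to the other through the base \<open>{U\<^sub>D}\<close>.\<close>

definition ultrafilter :: "'a filter \<Rightarrow> bool" where
  "ultrafilter U \<longleftrightarrow> U \<noteq> bot \<and> (\<forall>P. eventually P U \<or> eventually (\<lambda>x. \<not> P x) U)"

lemma ultrafilterI_maximal:
  assumes "U \<noteq> bot" and maximal: "\<And>G. G \<noteq> bot \<Longrightarrow> G \<le> U \<Longrightarrow> G = U"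
  shows "ultrafilter U"
  unfolding ultrafilter_def
proof (intro conjI allI disjCI)
  fix P
  assume "\<not> eventually (\<lambda>x. \<not> P x) U"
  then have "inf U (principal {x. P x}) \<noteq> bot"
    by (simp add: trivial_limit_def eventually_inf_principal not_eventually)
  then have "inf U (principal {x. P x}) = U"
    by (rule maximal) simp
  moreover have "eventually P (inf U (principal {x. P x}))"
    by (simp add: eventually_inf_principal)
  ultimately show "eventually P U"
    by simp
qed (fact \<open>U \<noteq> bot\<close>)

lemma ex_ultrafilter_le:
  fixes F :: "'a filter"
  assumes F: "F \<noteq> bot"
  shows "\<exists>U\<le>F. ultrafilter U"
proof -
  let ?R = "{(b, a). a \<noteq> bot \<and> a \<le> b \<and> b \<le> F}"
  have Field_R: "Field ?R = {G. G \<noteq> bot \<and> G \<le> F}"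
    by (auto simp: Field_def bot_unique)
  have "\<exists>m\<in>Field ?R. \<forall>a\<in>Field ?R. (m, a) \<in> ?R \<longrightarrow> a = m"
  proof (rule Zorns_po_lemma)
    show "Partial_order ?R"
      by (auto simp: partial_order_on_def preorder_on_def
          antisym_def refl_on_def trans_def Field_def bot_unique)
    show "\<exists>u\<in>Field ?R. \<forall>a\<in>C. (a, u) \<in> ?R" if C: "C \<in> Chains ?R" for C
    proof (simp add: Field_R, intro exI conjI ballI)
      have Inf_C: "Inf C \<noteq> bot" "Inf C \<le> F" if "C \<noteq> {}"
      proof -
        from C that have "Inf C = bot \<longleftrightarrow> (\<exists>x\<in>C. x = bot)"
          unfolding trivial_limit_def by (intro eventually_Inf_base) (auto simp: Chains_def)
        with C show "Inf C \<noteq> bot"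
          by (auto simp: Chains_def)
        from that obtain x where "x \<in> C" by auto
        with C show "Inf C \<le> F"
          by (auto intro!: Inf_lower2[of x] simp: Chains_def)
      qed
      then have inf_F_C: "inf F (Inf C) = (if C = {} then F else Inf C)"
        by (auto simp add: inf_absorb2)
      show "inf F (Inf C) \<noteq> bot" "inf F (Inf C) \<le> F"
        by (simp_all add: inf_F_C F Inf_C)
      show "inf F (Inf C) \<le> x" "x \<le> F" if "x \<in> C" for x
        using C that by (auto intro: le_infI2 Inf_lower simp: Chains_def)
    qed
  qed
  then obtain U where "U \<noteq> bot" "U \<le> F" "\<And>G. G \<noteq> bot \<Longrightarrow> G \<le> U \<Longrightarrow> G = U"
    by (auto simp: Field_R)
  then show ?thesis
    using ultrafilterI_maximal by blast
qed

lemma ultrafilter_tendsto_in_compact: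
  fixes f :: "'a \<Rightarrow> 'b::topological_space"
  assumes U: "ultrafilter U" and K: "compact K" and f: "eventually (\<lambda>x. f x \<in> K) U"
  shows "\<exists>c\<in>K. (f \<longlongrightarrow> c) U"
proof -
  have "filtermap f U \<noteq> bot"
    using U by (simp add: ultrafilter_def filtermap_bot_iff)
  moreover have "eventually (\<lambda>y. y \<in> K) (filtermap f U)"
    using f by (simp add: eventually_filtermap)
  ultimately obtain c where "c \<in> K" and c: "inf (nhds c) (filtermap f U) \<noteq> bot"
    using K unfolding compact_filter by blast
  have "eventually (\<lambda>x. f x \<in> S) U" if S: "open S" "c \<in> S" for S
  proof (rule ccontr)
    assume "\<not> eventually (\<lambda>x. f x \<in> S) U"
    then have "eventually (\<lambda>y. y \<notin> S) (filtermap f U)"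
      using U by (auto simp: ultrafilter_def eventually_filtermap)
    moreover have "eventually (\<lambda>y. y \<in> S) (nhds c)"
      using S eventually_nhds by blast
    ultimately have "eventually (\<lambda>y. False) (inf (nhds c) (filtermap f U))"
      unfolding eventually_inf by blast
    with c show False
      by (simp add: eventually_False)
  qed
  with \<open>c \<in> K\<close> show ?thesis
    unfolding tendsto_def by blast
qed

lemma LinfI: "f \<in> borel_measurable M \<Longrightarrow> (AE x in M. norm (f x) \<le> C) \<Longrightarrow> f \<in> Linf M"
  unfolding Linf_def by blast

lemma borel_measurable_Linf: "f \<in> Linf M \<Longrightarrow> f \<in> borel_measurable M"
  unfolding Linf_def by blast

lemma Linf_bounded:
  assumes "f \<in> Linf M"
  obtains C where "C \<ge> 0" "AE x in M. norm (f x) \<le> C"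
proof -
  from assms obtain C where "AE x in M. norm (f x) \<le> C"
    unfolding Linf_def by blast
  then have "AE x in M. norm (f x) \<le> max C 0"
    by eventually_elim auto
  then show ?thesis
    using that[of "max C 0"] by simp
qed

lemma Linf_add:
  assumes f: "f \<in> Linf M" and g: "g \<in> Linf M"
  shows "(\<lambda>x. f x + g x) \<in> Linf M"
proof -
  obtain C D where "AE x in M. norm (f x) \<le> C" "AE x in M. norm (g x) \<le> D"
    using Linf_bounded[OF f] Linf_bounded[OF g] by metis
  then have "AE x in M. norm (f x + g x) \<le> C + D"
    by eventually_elim (meson add_mono norm_triangle_ineq order_trans)
  then show ?thesis
    using borel_measurable_Linf[OF f] borel_measurable_Linf[OF g] by (intro LinfI) auto
qed

lemma Linf_mult:
  assumes f: "f \<in> Linf M" and g: "g \<in> Linf M"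
  shows "(\<lambda>x. f x * g x) \<in> Linf M"
proof -
  obtain C D where CD: "C \<ge> 0" "D \<ge> 0"
    and bounds: "AE x in M. norm (f x) \<le> C" "AE x in M. norm (g x) \<le> D"
    using Linf_bounded[OF f] Linf_bounded[OF g] by metis
  from bounds have "AE x in M. norm (f x * g x) \<le> C * D"
    by eventually_elim (simp add: norm_mult mult_mono CD)
  then show ?thesis
    using borel_measurable_Linf[OF f] borel_measurable_Linf[OF g] by (intro LinfI) auto
qed

lemma Linf_const: "(\<lambda>x. c) \<in> Linf M"
  by (rule LinfI[of _ _ "norm c"]) auto

lemma Linf_cmult: "f \<in> Linf M \<Longrightarrow> (\<lambda>x. c * f x) \<in> Linf M"
  using Linf_mult[OF Linf_const] .

lemma Linf_diff: "f \<in> Linf M \<Longrightarrow> g \<in> Linf M \<Longrightarrow> (\<lambda>x. f x - g x) \<in> Linf M"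
  using Linf_add[OF _ Linf_cmult[of g M "-1"]] by simp

lemma Linf_indicator: "A \<in> sets M \<Longrightarrow> (indicator A :: 'a \<Rightarrow> complex) \<in> Linf M"
  by (rule LinfI[of _ _ 1]) (auto simp: indicator_def)

context
  fixes M :: "'a measure" and \<phi> :: "('a \<Rightarrow> complex) \<Rightarrow> complex"
  assumes character: "\<phi> \<in> characters M"
begin

lemma character_ae_cong: "f \<in> Linf M \<Longrightarrow> g \<in> Linf M \<Longrightarrow> ae_eq M f g \<Longrightarrow> \<phi> f = \<phi> g"
  using character unfolding characters_def by blast

lemma character_add: "f \<in> Linf M \<Longrightarrow> g \<in> Linf M \<Longrightarrow> \<phi> (\<lambda>x. f x + g x) = \<phi> f + \<phi> g"
  using character unfolding characters_def by blast

lemma character_mult: "f \<in> Linf M \<Longrightarrow> g \<in> Linf M \<Longrightarrow> \<phi> (\<lambda>x. f x * g x) = \<phi> f * \<phi> g"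
  using character unfolding characters_def by blast

lemma character_cmult: "f \<in> Linf M \<Longrightarrow> \<phi> (\<lambda>x. c * f x) = c * \<phi> f"
  using character unfolding characters_def by blast

lemma character_one: "\<phi> (\<lambda>x. 1) = 1"
  using character unfolding characters_def by blast

lemma character_not_Linf: "f \<notin> Linf M \<Longrightarrow> \<phi> f = 0"
  using character unfolding characters_def by blast

lemma character_const: "\<phi> (\<lambda>x. c) = c"
  using character_cmult[OF Linf_const, of c 1] character_one by simp

lemma character_diff: "f \<in> Linf M \<Longrightarrow> g \<in> Linf M \<Longrightarrow> \<phi> (\<lambda>x. f x - g x) = \<phi> f - \<phi> g"
  using character_add[OF _ Linf_cmult[of g M "-1"]] character_cmult[of g "-1"] by simp

lemma character_indicator_eq_0_or_1:
  assumes "A \<in> sets M"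
  shows "\<phi> (indicator A) = 0 \<or> \<phi> (indicator A) = 1"
proof -
  have "(\<lambda>x. indicator A x * indicator A x :: complex) = indicator A"
    by (auto simp: indicator_def)
  then have "\<phi> (indicator A) = \<phi> (indicator A) * \<phi> (indicator A)"
    using character_mult[OF Linf_indicator Linf_indicator] assms by metis
  then show ?thesis
    by (metis mult_cancel_right1)
qed

lemma character_indicator_Int:
  "A \<in> sets M \<Longrightarrow> B \<in> sets M \<Longrightarrow> \<phi> (indicator (A \<inter> B)) = \<phi> (indicator A) * \<phi> (indicator B)"
  using character_mult[OF Linf_indicator Linf_indicator, of A B]
  by (simp add: indicator_inter_arith[abs_def])

lemma character_indicator_null:
  assumes A: "A \<in> null_sets M"
  shows "\<phi> (indicator A) = 0"
proof -
  have "ae_eq M (indicator A) (\<lambda>x. 0)"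
    using AE_not_in[OF A] unfolding ae_eq_def by eventually_elim simp
  then show ?thesis
    using character_ae_cong[OF Linf_indicator Linf_const] character_const A by auto
qed

lemma character_indicator_space: "\<phi> (indicator (space M)) = 1"
proof -
  have "ae_eq M (indicator (space M)) (\<lambda>x. 1)"
    unfolding ae_eq_def by (rule AE_I2) simp
  then show ?thesis
    using character_ae_cong[OF Linf_indicator[OF sets.top] Linf_const] character_one by simp
qed

lemma character_nonzero_if_bounded_below:
  assumes g: "g \<in> Linf M" and r: "r > 0" and below: "AE x in M. r \<le> norm (g x)"
  shows "\<phi> g \<noteq> 0"
proof
  assume "\<phi> g = 0"
  define h where "h x = 1 / g x" for x
  have "AE x in M. norm (h x) \<le> 1 / r"
    using below by eventually_elim (use r in \<open>simp add: h_def norm_divide frac_le\<close>)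
  then have h: "h \<in> Linf M"
    using borel_measurable_Linf[OF g] unfolding h_def by (intro LinfI) auto
  have "ae_eq M (\<lambda>x. g x * h x) (\<lambda>x. 1)"
    unfolding ae_eq_def using below by eventually_elim (use r in \<open>auto simp: h_def\<close>)
  then have "\<phi> g * \<phi> h = 1"
    using character_ae_cong[OF Linf_mult[OF g h] Linf_const] character_mult[OF g h] character_one
    by simp
  with \<open>\<phi> g = 0\<close> show False
    by simp
qed

lemma character_norm_le:
  assumes f: "f \<in> Linf M" and bound: "AE x in M. norm (f x) \<le> r"
  shows "norm (\<phi> f) \<le> r"
proof (rule ccontr)
  let ?c = "\<phi> f"
  assume "\<not> norm ?c \<le> r"
  then have r: "norm ?c - r > 0"
    by simp
  have "AE x in M. norm ?c - r \<le> norm (f x - ?c)"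
    using bound by eventually_elim (metis diff_mono norm_minus_commute norm_triangle_ineq2 order_refl order_trans)
  then have "\<phi> (\<lambda>x. f x - ?c) \<noteq> 0"
    using character_nonzero_if_bounded_below[OF Linf_diff[OF f Linf_const] r] by blast
  then show False
    using character_diff[OF f Linf_const] character_const by simp
qed

text \<open>\<open>\<phi> f\<close> lies in the essential range of \<open>f\<close>: otherwise \<open>f - \<phi> f\<close>, modified to the constant
  \<open>e\<close> on the preimage below, would be an invertible element annihilated by \<open>\<phi>\<close>.\<close>

lemma character_indicator_preimage_ball:
  assumes f: "f \<in> Linf M" and e: "e > 0"
  shows "\<phi> (indicator (f -` ball (\<phi> f) e \<inter> space M)) = 1"
proof (rule ccontr)
  let ?c = "\<phi> f" and ?D = "f -` ball (\<phi> f) e \<inter> space M"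
  have D: "?D \<in> sets M"
    using borel_measurable_Linf[OF f] by (intro measurable_sets borel_open) auto
  assume "\<phi> (indicator ?D) \<noteq> 1"
  then have D0: "\<phi> (indicator ?D) = 0"
    using character_indicator_eq_0_or_1[OF D] by blast
  define g where "g x = (f x - ?c) + (e - (f x - ?c)) * indicator ?D x" for x
  have fc: "(\<lambda>x. f x - ?c) \<in> Linf M" and ec: "(\<lambda>x. e - (f x - ?c)) \<in> Linf M"
    using f by (simp_all add: Linf_diff Linf_const)
  have g: "g \<in> Linf M"
    unfolding g_def using fc ec by (intro Linf_add Linf_mult Linf_indicator D)
  have "\<phi> g = 0"
    unfolding g_def
    using character_add[OF fc Linf_mult[OF ec Linf_indicator[OF D]]]
      character_mult[OF ec Linf_indicator[OF D]] character_diff[OF f Linf_const] character_const D0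
    by simp
  moreover have "e \<le> norm (g x)" if "x \<in> space M" for x
  proof (cases "x \<in> ?D")
    case False
    with that show ?thesis
      by (simp add: g_def dist_norm norm_minus_commute)
  qed (use e in \<open>simp add: g_def\<close>)
  then have "AE x in M. e \<le> norm (g x)"
    by (intro AE_I2)
  ultimately show False
    using character_nonzero_if_bounded_below[OF g e] by blast
qed

lemma character_dist_le:
  assumes f: "f \<in> Linf M" and D: "D \<in> sets M" "\<phi> (indicator D) = 1"
    and e: "0 \<le> e" "\<forall>x\<in>D. dist (f x) c \<le> e"
  shows "dist (\<phi> f) c \<le> e"
proof -
  have fc: "(\<lambda>x. f x - c) \<in> Linf M"
    using f by (simp add: Linf_diff Linf_const)
  have "\<phi> f - c = \<phi> (\<lambda>x. f x - c) * \<phi> (indicator D)"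
    using character_diff[OF f Linf_const] character_const D by simp
  also have "\<dots> = \<phi> (\<lambda>x. (f x - c) * indicator D x)"
    using character_mult[OF fc Linf_indicator[OF D(1)]] by simp
  finally have "\<phi> f - c = \<phi> (\<lambda>x. (f x - c) * indicator D x)" .
  moreover have "norm (\<phi> (\<lambda>x. (f x - c) * indicator D x)) \<le> e"
    using e by (intro character_norm_le Linf_mult fc Linf_indicator D AE_I2)
      (auto simp: indicator_def dist_norm)
  ultimately show ?thesis
    by (simp add: dist_norm)
qed

end

lemma tendsto_ultrafilter_Lim_Linf:
  assumes U: "ultrafilter U" "U \<le> ae_filter M" and f: "f \<in> Linf M"
  shows "(f \<longlongrightarrow> Lim U f) U"
proof -
  obtain C where "AE x in M. norm (f x) \<le> C"
    using Linf_bounded[OF f] by metis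
  then have "eventually (\<lambda>x. f x \<in> cball 0 C) U"
    using filter_leD[OF U(2)] by simp
  then obtain c where "(f \<longlongrightarrow> c) U"
    using ultrafilter_tendsto_in_compact[OF U(1) compact_cball] by blast
  then show ?thesis
    using U(1) tendsto_Lim by (metis ultrafilter_def)
qed

lemma ultrafilter_limit_character:
  assumes U: "ultrafilter U" "U \<le> ae_filter M"
  shows "(\<lambda>f. if f \<in> Linf M then Lim U f else 0) \<in> characters M" (is "?\<phi> \<in> _")
proof -
  have lim: "(f \<longlongrightarrow> ?\<phi> f) U" if "f \<in> Linf M" for f
    using tendsto_ultrafilter_Lim_Linf[OF U that] that by simp
  have unique: "?\<phi> f = a" if "f \<in> Linf M" "(f \<longlongrightarrow> a) U" for f a
    using tendsto_unique[OF _ lim[OF that(1)] that(2)] U(1) unfolding ultrafilter_def by blast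
  show ?thesis
    unfolding characters_def
  proof (intro CollectI conjI ballI allI impI)
    show "?\<phi> f = ?\<phi> g" if "f \<in> Linf M" "g \<in> Linf M" "ae_eq M f g" for f g
    proof -
      have "eventually (\<lambda>x. f x = g x) U"
        using that(3) filter_leD[OF U(2)] unfolding ae_eq_def by blast
      then have "(g \<longlongrightarrow> ?\<phi> f) U"
        using lim[OF that(1)] tendsto_cong by blast
      then show ?thesis
        using unique[OF that(2)] by simp
    qed
    show "?\<phi> (\<lambda>x. f x + g x) = ?\<phi> f + ?\<phi> g" if "f \<in> Linf M" "g \<in> Linf M" for f g
      using that by (intro unique Linf_add tendsto_add lim)
    show "?\<phi> (\<lambda>x. f x * g x) = ?\<phi> f * ?\<phi> g" if "f \<in> Linf M" "g \<in> Linf M" for f g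
      using that by (intro unique Linf_mult tendsto_mult lim)
    show "?\<phi> (\<lambda>x. c * f x) = c * ?\<phi> f" if "f \<in> Linf M" for f c
      using that by (intro unique Linf_cmult tendsto_mult tendsto_const lim)
    show "?\<phi> (\<lambda>x. 1) = 1"
      by (intro unique Linf_const tendsto_const)
  qed simp
qed

lemma ex_character_indicator_eq_1:
  assumes D: "D \<in> sets M" and pos: "emeasure M D \<noteq> 0"
  shows "\<exists>\<phi>\<in>characters M. \<phi> (indicator D) = 1"
proof -
  define F where "F = inf (ae_filter M) (principal D)"
  have "F \<noteq> bot"
  proof
    assume "F = bot"
    then have "eventually (\<lambda>x. False) F"
      by simp
    then have "AE x in M. x \<notin> D"
      unfolding F_def eventually_inf_principal by simp
    then show False
      using AE_iff_null_sets[OF D] pos by auto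
  qed
  then obtain U where U: "U \<le> F" "ultrafilter U"
    using ex_ultrafilter_le by blast
  then have "U \<le> ae_filter M"
    unfolding F_def by (meson inf_le1 order_trans)
  define \<phi> where "\<phi> f = (if f \<in> Linf M then Lim U f else 0)" for f :: "'a \<Rightarrow> complex"
  have "\<phi> \<in> characters M"
    unfolding \<phi>_def using ultrafilter_limit_character[OF U(2) \<open>U \<le> ae_filter M\<close>] .
  have "eventually (\<lambda>x. x \<in> D) F"
    unfolding F_def eventually_inf_principal by simp
  then have "eventually (\<lambda>x. x \<in> D) U"
    using filter_leD[OF U(1)] by blast
  then have "eventually (\<lambda>x. indicator D x = (1::complex)) U"
    by eventually_elim simp
  then have "((indicator D :: 'a \<Rightarrow> complex) \<longlongrightarrow> 1) U"
    by (rule tendsto_eventually)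
  then have "Lim U (indicator D :: 'a \<Rightarrow> complex) = 1"
    using U(2) tendsto_Lim unfolding ultrafilter_def by blast
  then have "\<phi> (indicator D) = 1"
    using Linf_indicator[OF D] by (simp add: \<phi>_def)
  with \<open>\<phi> \<in> characters M\<close> show ?thesis
    by blast
qed

definition gelfand_clopen :: "'a measure \<Rightarrow> 'a set \<Rightarrow> (('a \<Rightarrow> complex) \<Rightarrow> complex) set" where
  "gelfand_clopen M D = {\<phi> \<in> characters M. \<phi> (indicator D) = 1}"

lemma topspace_gelfand_top: "topspace (gelfand_top M) = characters M"
  unfolding gelfand_top_def by simp

lemma gelfand_clopen_subset: "gelfand_clopen M D \<subseteq> characters M"
  unfolding gelfand_clopen_def by auto

lemma gelfand_clopen_space: "gelfand_clopen M (space M) = characters M"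
  unfolding gelfand_clopen_def using character_indicator_space by blast

lemma gelfand_clopen_Int:
  assumes "A \<in> sets M" "B \<in> sets M"
  shows "gelfand_clopen M (A \<inter> B) = gelfand_clopen M A \<inter> gelfand_clopen M B"
proof -
  have "\<phi> (indicator (A \<inter> B)) = 1 \<longleftrightarrow> \<phi> (indicator A) = 1 \<and> \<phi> (indicator B) = 1"
    if "\<phi> \<in> characters M" for \<phi>
    using character_indicator_Int[OF that assms] character_indicator_eq_0_or_1[OF that assms(1)]
      character_indicator_eq_0_or_1[OF that assms(2)]
    by (metis mult_1 mult_zero_left mult_zero_right zero_neq_one)
  then show ?thesis
    unfolding gelfand_clopen_def by auto
qed

lemma gelfand_clopen_INT:
  assumes "finite J" "\<And>i. i \<in> J \<Longrightarrow> D i \<in> sets M"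
  shows "space M \<inter> (\<Inter>i\<in>J. D i) \<in> sets M \<and>
    gelfand_clopen M (space M \<inter> (\<Inter>i\<in>J. D i)) = characters M \<inter> (\<Inter>i\<in>J. gelfand_clopen M (D i))"
  using assms
proof (induction J rule: finite_induct)
  case empty
  then show ?case
    by (simp add: gelfand_clopen_space)
next
  case (insert i J)
  let ?S = "space M \<inter> (\<Inter>j\<in>J. D j)"
  have Di: "D i \<in> sets M"
    using insert.prems by simp
  have S: "?S \<in> sets M" "gelfand_clopen M ?S = characters M \<inter> (\<Inter>j\<in>J. gelfand_clopen M (D j))"
    using insert.IH insert.prems by auto
  have "space M \<inter> (\<Inter>j\<in>insert i J. D j) = D i \<inter> ?S"
    using sets.sets_into_space[OF Di] by blast
  moreover have "gelfand_clopen M (D i \<inter> ?S) = gelfand_clopen M (D i) \<inter> gelfand_clopen M ?S"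
    using gelfand_clopen_Int[OF Di S(1)] .
  ultimately show ?case
    using Di S gelfand_clopen_subset[of M "D i"] by auto
qed

lemma gelfand_clopen_mono:
  "A \<in> sets M \<Longrightarrow> B \<in> sets M \<Longrightarrow> A \<subseteq> B \<Longrightarrow> gelfand_clopen M A \<subseteq> gelfand_clopen M B"
  using gelfand_clopen_Int[of A M B] by (metis Int_absorb2 inf.cobounded2)

lemma gelfand_clopen_eq_empty_iff:
  "D \<in> sets M \<Longrightarrow> gelfand_clopen M D = {} \<longleftrightarrow> emeasure M D = 0"
  unfolding gelfand_clopen_def
  using ex_character_indicator_eq_1[of D M] character_indicator_null[of _ M D]
  by (force simp: null_sets_def)

lemma openin_gelfand_clopen:
  assumes D: "D \<in> sets M"
  shows "openin (gelfand_top M) (gelfand_clopen M D)"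
proof -
  let ?P = "product_topology (\<lambda>_. euclidean) UNIV :: (('a \<Rightarrow> complex) \<Rightarrow> complex) topology"
  let ?T = "{\<phi> \<in> topspace ?P. \<phi> (indicator D) \<in> - {0}}"
  have "openin ?P ?T"
    by (rule openin_continuous_map_preimage[OF continuous_map_product_projection]) auto
  moreover have "gelfand_clopen M D = ?T \<inter> characters M"
    unfolding gelfand_clopen_def using character_indicator_eq_0_or_1[OF _ D] by force
  ultimately show ?thesis
    unfolding gelfand_top_def openin_subtopology by blast
qed

lemma gelfand_clopen_neighbourhood:
  assumes \<phi>: "\<phi> \<in> characters M" and f: "f \<in> Linf M" and W: "open W" "\<phi> f \<in> W"
  shows "\<exists>D\<in>sets M. \<phi> \<in> gelfand_clopen M D \<and> (\<forall>\<psi>\<in>gelfand_clopen M D. \<psi> f \<in> W)"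
proof -
  obtain e where e: "e > 0" "ball (\<phi> f) e \<subseteq> W"
    using W open_contains_ball by blast
  let ?D = "f -` ball (\<phi> f) (e/2) \<inter> space M"
  have D: "?D \<in> sets M"
    using borel_measurable_Linf[OF f] by (intro measurable_sets borel_open) auto
  moreover have "\<phi> \<in> gelfand_clopen M ?D"
    unfolding gelfand_clopen_def using character_indicator_preimage_ball[OF \<phi> f] e \<phi> by simp
  moreover have "\<psi> f \<in> W" if "\<psi> \<in> gelfand_clopen M ?D" for \<psi>
  proof -
    have "dist (\<psi> f) (\<phi> f) \<le> e/2"
      using that e unfolding gelfand_clopen_def
      by (intro character_dist_le[OF _ f D]) (auto simp: dist_commute)
    with e show ?thesis
      by (auto simp: dist_commute)
  qed
  ultimately show ?thesis
    by blast
qed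

lemma gelfand_clopen_base:
  assumes U: "openin (gelfand_top M) U" and "\<phi> \<in> U"
  obtains D where "D \<in> sets M" "\<phi> \<in> gelfand_clopen M D" "gelfand_clopen M D \<subseteq> U"
proof -
  obtain T where T: "openin (product_topology (\<lambda>_. euclidean) UNIV) T" "U = T \<inter> characters M"
    using U unfolding gelfand_top_def openin_subtopology by blast
  have \<phi>: "\<phi> \<in> characters M" "\<phi> \<in> T"
    using \<open>\<phi> \<in> U\<close> T by auto
  obtain W where W: "finite {i. W i \<noteq> UNIV}" "\<And>i. open (W i)" "\<phi> \<in> Pi\<^sub>E UNIV W" "Pi\<^sub>E UNIV W \<subseteq> T"
    using T(1) \<phi>(2) unfolding openin_product_topology_alt by auto
  define J where "J = {i. W i \<noteq> UNIV} \<inter> Linf M"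
  have "\<exists>Di\<in>sets M. \<phi> \<in> gelfand_clopen M Di \<and> (\<forall>\<psi>\<in>gelfand_clopen M Di. \<psi> i \<in> W i)"
    if "i \<in> J" for i
  proof (rule gelfand_clopen_neighbourhood[OF \<phi>(1) _ W(2)])
    show "i \<in> Linf M"
      using that unfolding J_def by blast
    show "\<phi> i \<in> W i"
      using W(3) by (simp add: PiE_iff)
  qed
  then obtain Di where Di: "\<And>i. i \<in> J \<Longrightarrow> Di i \<in> sets M" "\<And>i. i \<in> J \<Longrightarrow> \<phi> \<in> gelfand_clopen M (Di i)"
    "\<And>i \<psi>. i \<in> J \<Longrightarrow> \<psi> \<in> gelfand_clopen M (Di i) \<Longrightarrow> \<psi> i \<in> W i"
    by metis
  define D where "D = space M \<inter> (\<Inter>i\<in>J. Di i)"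
  have "finite J"
    using W(1) unfolding J_def by simp
  from gelfand_clopen_INT[of J Di, OF this Di(1)]
  have D: "D \<in> sets M" "gelfand_clopen M D = characters M \<inter> (\<Inter>i\<in>J. gelfand_clopen M (Di i))"
    unfolding D_def by blast+
  have "\<psi> \<in> Pi\<^sub>E UNIV W" if \<psi>: "\<psi> \<in> gelfand_clopen M D" for \<psi>
  proof (intro PiE_I)
    fix i
    show "\<psi> i \<in> W i"
    proof (cases "i \<in> J")
      case True
      then show ?thesis
        using \<psi> D(2) Di(3) by blast
    next
      case False
      then have "W i = UNIV \<or> \<psi> i = \<phi> i"
        using character_not_Linf[of \<psi> M i] character_not_Linf[OF \<phi>(1), of i] \<psi> D(2)
        unfolding J_def by auto
      then show ?thesis
        using W(3) by auto
    qed
  qed simp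
  then have "gelfand_clopen M D \<subseteq> U"
    using W(4) T(2) gelfand_clopen_subset by blast
  moreover have "\<phi> \<in> gelfand_clopen M D"
    using D(2) Di(2) \<phi>(1) by blast
  ultimately show ?thesis
    using that D(1) by blast
qed

lemma idempotent_ae_eq_indicator:
  fixes f :: "'a \<Rightarrow> complex"
  assumes f: "f \<in> borel_measurable M" and idem: "AE x in M. f x * f x = f x"
  shows "\<exists>A. A \<in> sets M \<and> ae_eq M f (indicator A)"
proof (intro exI conjI)
  let ?A = "f -` {1} \<inter> space M"
  show "?A \<in> sets M"
    using f by (intro measurable_sets borel_closed) auto
  show "ae_eq M f (indicator ?A)"
    unfolding ae_eq_def using idem AE_space
  proof eventually_elim
    case (elim x)
    then have "f x = 0 \<or> f x = 1"
      by (metis mult_cancel_right1)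
    with elim show ?case
      by (auto simp: indicator_def)
  qed
qed

lemma Linf_automorphism_indicator:
  assumes T: "Linf_automorphism M T" and D: "D \<in> sets M"
  shows "\<exists>A. A \<in> sets M \<and> ae_eq M (T (indicator D)) (indicator A)"
proof (rule idempotent_ae_eq_indicator)
  have idem: "(\<lambda>x. indicator D x * indicator D x :: complex) = indicator D"
    by (auto simp: indicator_def)
  have "ae_eq M (T (\<lambda>x. indicator D x * indicator D x)) (\<lambda>x. T (indicator D) x * T (indicator D) x)"
    using T Linf_indicator[OF D] unfolding Linf_automorphism_def by blast
  then show "AE x in M. T (indicator D) x * T (indicator D) x = T (indicator D) x"
    unfolding ae_eq_def idem by eventually_elim (rule sym)
  show "T (indicator D) \<in> borel_measurable M"
    using T Linf_indicator[OF D] unfolding Linf_automorphism_def by (blast intro: borel_measurable_Linf)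
qed

lemma
  assumes "Linf_automorphism M (\<theta> g)" and "D \<in> sets M"
  shows sets_alpha: "alpha M \<theta> g D \<in> sets M"
    and ae_eq_alpha: "ae_eq M (\<theta> g (indicator D)) (indicator (alpha M \<theta> g D))"
  using someI_ex[OF Linf_automorphism_indicator[OF assms]] unfolding alpha_def by auto

locale Linf_dynamics =
  fixes M :: "'a measure"
    and \<theta> :: "'g \<Rightarrow> ('a \<Rightarrow> complex) \<Rightarrow> ('a \<Rightarrow> complex)"
    and t :: "'g \<Rightarrow> (('a \<Rightarrow> complex) \<Rightarrow> complex) \<Rightarrow> (('a \<Rightarrow> complex) \<Rightarrow> complex)"
  assumes automorphism: "Linf_automorphism M (\<theta> g)"
    and homeomorphic: "homeomorphic_map (gelfand_top M) (gelfand_top M) (t g)"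
    and gelfand_equivariant: "\<And>z m. z \<in> Linf M \<Longrightarrow> m \<in> characters M \<Longrightarrow>
      gelfand (\<theta> g z) m = gelfand z (inv_into (characters M) (t g) m)"
begin

lemma image_gelfand_clopen:
  assumes D: "D \<in> sets M"
  shows "t g ` gelfand_clopen M D = gelfand_clopen M (alpha M \<theta> g D)"
proof -
  let ?X = "characters M" and ?A = "alpha M \<theta> g D"
  have surj: "t g ` ?X = ?X" and inj: "inj_on (t g) ?X"
    using homeomorphic_imp_surjective_map[OF homeomorphic] homeomorphic_imp_injective_map[OF homeomorphic]
    by (simp_all add: topspace_gelfand_top)
  have A: "?A \<in> sets M" "ae_eq M (\<theta> g (indicator D)) (indicator ?A)"
    using sets_alpha[of M \<theta> g, OF automorphism D] ae_eq_alpha[of M \<theta> g, OF automorphism D] .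
  have \<theta>D: "\<theta> g (indicator D) \<in> Linf M"
    using automorphism Linf_indicator[OF D] unfolding Linf_automorphism_def by blast
  have pullback: "inv_into ?X (t g) m (indicator D) = m (indicator ?A)" if "m \<in> ?X" for m
  proof -
    have "inv_into ?X (t g) m (indicator D) = m (\<theta> g (indicator D))"
      using gelfand_equivariant[OF Linf_indicator[OF D] that] by (simp add: gelfand_def)
    also have "\<dots> = m (indicator ?A)"
      using character_ae_cong[OF that \<theta>D Linf_indicator[OF A(1)] A(2)] .
    finally show ?thesis .
  qed
  show ?thesis
  proof safe
    fix c assume "c \<in> gelfand_clopen M D"
    then show "t g c \<in> gelfand_clopen M ?A"
      using pullback[of "t g c"] inv_into_f_f[OF inj] surj unfolding gelfand_clopen_def by auto
  next
    fix m assume m: "m \<in> gelfand_clopen M ?A"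
    then have "m \<in> t g ` ?X"
      using surj gelfand_clopen_subset by blast
    then have "inv_into ?X (t g) m \<in> gelfand_clopen M D" "m = t g (inv_into ?X (t g) m)"
      using pullback m inv_into_into[of m "t g" ?X] f_inv_into_f[of m "t g" ?X]
      unfolding gelfand_clopen_def by auto
    then show "m \<in> t g ` gelfand_clopen M D"
      by blast
  qed
qed

lemma disjoint_images_gelfand_clopen_iff:
  assumes D: "D \<in> sets M"
  shows "t g ` gelfand_clopen M D \<inter> t h ` gelfand_clopen M D = {} \<longleftrightarrow>
    emeasure M (alpha M \<theta> g D \<inter> alpha M \<theta> h D) = 0"
proof -
  have A: "alpha M \<theta> g D \<in> sets M" "alpha M \<theta> h D \<in> sets M"
    using sets_alpha[of M \<theta> g, OF automorphism D] sets_alpha[of M \<theta> h, OF automorphism D] .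
  have "t g ` gelfand_clopen M D \<inter> t h ` gelfand_clopen M D =
      gelfand_clopen M (alpha M \<theta> g D \<inter> alpha M \<theta> h D)"
    using image_gelfand_clopen[OF D] gelfand_clopen_Int[OF A] by simp
  then show ?thesis
    using gelfand_clopen_eq_empty_iff[OF sets.Int[OF A]] by simp
qed

lemma topologically_free_if_metrically_free:
  assumes "metrically_free M \<theta>"
  shows "topologically_free (gelfand_top M) t"
  unfolding topologically_free_def
proof (intro allI impI)
  fix F :: "'g set" and U
  assume F: "finite F" and U: "openin (gelfand_top M) U \<and> U \<noteq> {}"
  then obtain \<phi> where "\<phi> \<in> U"
    by blast
  then obtain D where D: "D \<in> sets M" "\<phi> \<in> gelfand_clopen M D" "gelfand_clopen M D \<subseteq> U"
    by (rule gelfand_clopen_base[OF conjunct1[OF U]])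
  have "emeasure M D > 0"
    using gelfand_clopen_eq_empty_iff[OF D(1)] D(2) by (auto simp: zero_less_iff_neq_zero)
  then obtain D' where D': "D' \<in> sets M" "D' \<subseteq> D" "emeasure M D' > 0"
    "\<forall>g\<in>F. \<forall>h\<in>F. g \<noteq> h \<longrightarrow> emeasure M (alpha M \<theta> g D' \<inter> alpha M \<theta> h D') = 0"
    using assms[unfolded metrically_free_def, rule_format, OF F D(1)] by blast
  show "\<exists>V. openin (gelfand_top M) V \<and> V \<noteq> {} \<and> V \<subseteq> U \<and>
      (\<forall>g\<in>F. \<forall>h\<in>F. g \<noteq> h \<longrightarrow> t g ` V \<inter> t h ` V = {})"
  proof (intro exI conjI)
    show "openin (gelfand_top M) (gelfand_clopen M D')"
      by (rule openin_gelfand_clopen[OF D'(1)])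
    show "gelfand_clopen M D' \<noteq> {}"
      using gelfand_clopen_eq_empty_iff[OF D'(1)] D'(3) by simp
    show "gelfand_clopen M D' \<subseteq> U"
      using gelfand_clopen_mono[OF D'(1) D(1) D'(2)] D(3) by blast
    show "\<forall>g\<in>F. \<forall>h\<in>F. g \<noteq> h \<longrightarrow> t g ` gelfand_clopen M D' \<inter> t h ` gelfand_clopen M D' = {}"
      using D'(4) disjoint_images_gelfand_clopen_iff[OF D'(1)] by blast
  qed
qed

lemma metrically_free_if_topologically_free:
  assumes "topologically_free (gelfand_top M) t"
  shows "metrically_free M \<theta>"
  unfolding metrically_free_def
proof (intro allI impI ballI)
  fix F :: "'g set" and D
  assume F: "finite F" and D: "D \<in> sets M" "emeasure M D > 0"
  then have "openin (gelfand_top M) (gelfand_clopen M D) \<and> gelfand_clopen M D \<noteq> {}"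
    using openin_gelfand_clopen[OF D(1)] gelfand_clopen_eq_empty_iff[OF D(1)] by simp
  from assms[unfolded topologically_free_def, rule_format, OF F this]
  obtain V where V: "openin (gelfand_top M) V" "V \<noteq> {}" "V \<subseteq> gelfand_clopen M D"
    "\<forall>g\<in>F. \<forall>h\<in>F. g \<noteq> h \<longrightarrow> t g ` V \<inter> t h ` V = {}"
    by blast
  then obtain \<phi> where "\<phi> \<in> V"
    by blast
  then obtain D1 where D1: "D1 \<in> sets M" "\<phi> \<in> gelfand_clopen M D1" "gelfand_clopen M D1 \<subseteq> V"
    by (rule gelfand_clopen_base[OF V(1)])
  let ?D' = "D1 \<inter> D"
  have D': "?D' \<in> sets M"
    using D1(1) D(1) by (rule sets.Int)
  have clopen_eq: "gelfand_clopen M ?D' = gelfand_clopen M D1"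
    using gelfand_clopen_Int[OF D1(1) D(1)] D1(3) V(3) by blast
  show "\<exists>D'\<in>sets M. D' \<subseteq> D \<and> emeasure M D' > 0 \<and>
      (\<forall>g\<in>F. \<forall>h\<in>F. g \<noteq> h \<longrightarrow> emeasure M (alpha M \<theta> g D' \<inter> alpha M \<theta> h D') = 0)"
  proof (intro bexI conjI ballI impI)
    show "?D' \<subseteq> D"
      by blast
    show "emeasure M ?D' > 0"
      using gelfand_clopen_eq_empty_iff[OF D'] clopen_eq D1(2) by (auto simp: zero_less_iff_neq_zero)
    fix g h assume "g \<in> F" "h \<in> F" "g \<noteq> h"
    then have "t g ` gelfand_clopen M ?D' \<inter> t h ` gelfand_clopen M ?D' = {}"
      using V(4) clopen_eq D1(3) by blast
    then show "emeasure M (alpha M \<theta> g ?D' \<inter> alpha M \<theta> h ?D') = 0"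
      using disjoint_images_gelfand_clopen_iff[OF D'] by blast
  qed (rule D')
qed

lemma metrically_free_iff_topologically_free:
  "metrically_free M \<theta> \<longleftrightarrow> topologically_free (gelfand_top M) t"
  using metrically_free_if_topologically_free topologically_free_if_metrically_free by blast

end

theorem mainTheorem2:
  fixes M :: "'a measure"
    and \<theta> :: "'g::group_add \<Rightarrow> ('a \<Rightarrow> complex) \<Rightarrow> ('a \<Rightarrow> complex)"
    and t :: "'g \<Rightarrow> (('a \<Rightarrow> complex) \<Rightarrow> complex) \<Rightarrow> (('a \<Rightarrow> complex) \<Rightarrow> complex)"
  assumes "sigma_finite_measure M"
    and "Linf_group_action M \<theta>"
    and "\<And>g. homeomorphic_map (gelfand_top M) (gelfand_top M) (t g)"
    and "\<And>g z m. z \<in> Linf M \<Longrightarrow> m \<in> characters M \<Longrightarrow>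
           gelfand (\<theta> g z) m = gelfand z (inv_into (characters M) (t g) m)"
  shows "metrically_free M \<theta> \<longleftrightarrow> topologically_free (gelfand_top M) t"
proof -
  interpret Linf_dynamics M \<theta> t
    using assms(2-4) by unfold_locales (auto simp: Linf_group_action_def)
  show ?thesis
    by (rule metrically_free_iff_topologically_free)
qed

end
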